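(* Let $f=\sum_{i=0}^{d-1}c_it^i+t^d\in\mathcal{L}[t]$ be monic of degree $d\ge1$ with $c_0\ne0$, whose Newton polygon consists of exactly one edge, of slope $s$, and put $r=ds\in\mathbb{Z}$. Let $M$ be a left $\mathcal{L}[t]$-module isomorphic to $\mathcal{L}[t]/\mathcal{L}[t]f$. (1) There is an $\mathcal{O}$-lattice $\Lambda$ in $M$ with $\sigma^rt^d\Lambda=\Lambda$. If $s>0$, $\Lambda$ can moreover be chosen with $t^{-1}\Lambda\subseteq\Lambda$. (2) If $u,v\in\mathbb{Z}$, $u\ne0$, and $\Lambda'$ is an $\mathcal{O}$-lattice in $M$ with $\sigma^vt^u\Lambda'=\Lambda'$, then $v/u=s$.
   Context: $(\mathcal{L},v)$ is a complete discretely valued skew field (division ring with a discrete valuation $v:\mathcal{L}\to\mathbb{Z}\cup\{\infty\}$, complete), with valuation ring $\mathcal{O}=\{v\ge0\}$ and a fixed uniformizer $\sigma$ ($v(\sigma)=1$). $\mathcal{L}[t]$ is the polynomial ring in a central indeterminate $t$; $t$ acts invertibly on $M$ here since $c_0\neq 0$. The Newton polygon of $f=\sum a_it^i$ is the lower convex hull of the points $(i,v(a_i))$ with $a_i\ne0$. An $\mathcal{O}$-lattice in a finite-dimensional left $\mathcal{L}$-vector space $M$ is a finitely generated $\mathcal{O}$-submodule containing an $\mathcal{L}$-basis of $M$. *)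

theory Defs
  imports "HOL-Analysis.Analysis" "HOL-Library.Poly_Mapping"
begin

text \<open>The skew field L is the type 'a (class division_ring). The polynomial ring L[t]
  with central indeterminate t is the ring of finitely supported coefficient maps
  finitely supported maps (convolution product; t = single 1 1 is central).\<close>

definition discrete_valuation :: "('a::division_ring \<Rightarrow> int) \<Rightarrow> bool" where
  "discrete_valuation val \<longleftrightarrow>
     (\<forall>x y. x \<noteq> 0 \<longrightarrow> y \<noteq> 0 \<longrightarrow> val (x * y) = val x + val y) \<and>
     (\<forall>x y. x \<noteq> 0 \<longrightarrow> y \<noteq> 0 \<longrightarrow> x + y \<noteq> 0 \<longrightarrow> val (x + y) \<ge> min (val x) (val y))"

text \<open>Completeness w.r.t. the valuation topology (val 0 = infinity is encoded by the guards).\<close>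
definition val_complete :: "('a::division_ring \<Rightarrow> int) \<Rightarrow> bool" where
  "val_complete val \<longleftrightarrow>
     (\<forall>X::nat \<Rightarrow> 'a.
        (\<forall>N::int. \<exists>K. \<forall>m\<ge>K. \<forall>n\<ge>K. X m \<noteq> X n \<longrightarrow> val (X m - X n) \<ge> N) \<longrightarrow>
        (\<exists>l. \<forall>N::int. \<exists>K. \<forall>n\<ge>K. X n \<noteq> l \<longrightarrow> val (X n - l) \<ge> N))"

definition val_ring :: "('a::division_ring \<Rightarrow> int) \<Rightarrow> 'a set" where
  "val_ring val = {x. x = 0 \<or> 0 \<le> val x}"

definition monic_poly :: "(nat \<Rightarrow> 'a::division_ring) \<Rightarrow> nat \<Rightarrow> nat \<Rightarrow>\<^sub>0 'a" where
  "monic_poly c d = (\<Sum>i<d. Poly_Mapping.single i (c i)) + Poly_Mapping.single d 1"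

text \<open>Newton polygon: the lower convex hull of the points (i, val a_i), a_i \<noteq> 0, as a
  function on [min i, max i].\<close>
definition newton_polygon :: "('a::division_ring \<Rightarrow> int) \<Rightarrow> (nat \<Rightarrow>\<^sub>0 'a) \<Rightarrow> real \<Rightarrow> real" where
  "newton_polygon val f x = Inf {(\<Sum>i\<in>Poly_Mapping.keys f. l i * real_of_int (val (Poly_Mapping.lookup f i))) | l.
       (\<forall>i. 0 \<le> l i) \<and> (\<Sum>i\<in>Poly_Mapping.keys f. l i) = 1 \<and> (\<Sum>i\<in>Poly_Mapping.keys f. l i * real i) = x}"

definition newton_single_edge :: "('a::division_ring \<Rightarrow> int) \<Rightarrow> (nat \<Rightarrow>\<^sub>0 'a) \<Rightarrow> real \<Rightarrow> bool" where
  "newton_single_edge val f s \<longleftrightarrow> Poly_Mapping.keys f \<noteq> {} \<and> Min (Poly_Mapping.keys f) < Max (Poly_Mapping.keys f) \<and>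
     (\<exists>b. \<forall>x\<in>{real (Min (Poly_Mapping.keys f))..real (Max (Poly_Mapping.keys f))}. newton_polygon val f x = b + s * x)"

definition left_module :: "((nat \<Rightarrow>\<^sub>0 'a::division_ring) \<Rightarrow> 'm::ab_group_add \<Rightarrow> 'm) \<Rightarrow> bool" where
  "left_module act \<longleftrightarrow>
     (\<forall>g h x. act (g + h) x = act g x + act h x) \<and>
     (\<forall>g x y. act g (x + y) = act g x + act g y) \<and>
     (\<forall>g h x. act (g * h) x = act g (act h x)) \<and>
     (\<forall>x. act 1 x = x)"

text \<open>M is isomorphic to L[t]/L[t]f: there is m0 such that g \<mapsto> g m0 is onto with kernel L[t]f.\<close>
definition iso_cyclic_quotient :: "((nat \<Rightarrow>\<^sub>0 'a::division_ring) \<Rightarrow> 'm::ab_group_add \<Rightarrow> 'm) \<Rightarrow> (nat \<Rightarrow>\<^sub>0 'a) \<Rightarrow> bool" where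
  "iso_cyclic_quotient act f \<longleftrightarrow>
     (\<exists>m0. (\<forall>x. \<exists>g. x = act g m0) \<and> (\<forall>g. act g m0 = 0 \<longleftrightarrow> (\<exists>h. g = h * f)))"

definition scal :: "((nat \<Rightarrow>\<^sub>0 'a::division_ring) \<Rightarrow> 'm \<Rightarrow> 'm) \<Rightarrow> 'a \<Rightarrow> 'm \<Rightarrow> 'm" where
  "scal act a x = act (Poly_Mapping.single 0 a) x"

definition tact :: "((nat \<Rightarrow>\<^sub>0 'a::division_ring) \<Rightarrow> 'm \<Rightarrow> 'm) \<Rightarrow> 'm \<Rightarrow> 'm" where
  "tact act = act (Poly_Mapping.single 1 1)"

text \<open>t^u for u an integer (t acts invertibly on M).\<close>
definition tpow :: "((nat \<Rightarrow>\<^sub>0 'a::division_ring) \<Rightarrow> 'm \<Rightarrow> 'm) \<Rightarrow> int \<Rightarrow> 'm \<Rightarrow> 'm" where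
  "tpow act u = (if 0 \<le> u then tact act ^^ nat u else inv (tact act) ^^ nat (- u))"

definition O_span :: "('a::division_ring \<Rightarrow> int) \<Rightarrow> ((nat \<Rightarrow>\<^sub>0 'a) \<Rightarrow> 'm::ab_group_add \<Rightarrow> 'm) \<Rightarrow> 'm set \<Rightarrow> 'm set" where
  "O_span val act G = {(\<Sum>g\<in>G. scal act (a g) g) | a. \<forall>g\<in>G. a g \<in> val_ring val}"

definition L_basis :: "((nat \<Rightarrow>\<^sub>0 'a::division_ring) \<Rightarrow> 'm::ab_group_add \<Rightarrow> 'm) \<Rightarrow> 'm set \<Rightarrow> bool" where
  "L_basis act B \<longleftrightarrow>
     (\<forall>x. \<exists>S a. finite S \<and> S \<subseteq> B \<and> x = (\<Sum>b\<in>S. scal act (a b) b)) \<and>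
     (\<forall>S a. finite S \<longrightarrow> S \<subseteq> B \<longrightarrow> (\<Sum>b\<in>S. scal act (a b) b) = 0 \<longrightarrow> (\<forall>b\<in>S. a b = 0))"

definition O_lattice :: "('a::division_ring \<Rightarrow> int) \<Rightarrow> ((nat \<Rightarrow>\<^sub>0 'a) \<Rightarrow> 'm::ab_group_add \<Rightarrow> 'm) \<Rightarrow> 'm set \<Rightarrow> bool" where
  "O_lattice val act \<Lambda> \<longleftrightarrow> (\<exists>G. finite G \<and> \<Lambda> = O_span val act G) \<and> (\<exists>B\<subseteq>\<Lambda>. L_basis act B)"

end

theory Submission
  imports Defs
begin

text \<open>Write \<open>e\<^sub>k = t\<^sup>k m\<^sub>0\<close> (\<open>k \<in> \<int>\<close>) for the images of the cyclic generator \<open>m\<^sub>0\<close>; they satisfy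
  the linear recurrence \<open>\<Sum>\<^sub>j c\<^sub>j e\<^sub>k\<^sub>+\<^sub>j = 0\<close> given by \<open>f\<close>, and \<open>e\<^sub>0, \<dots>, e\<^sub>d\<^sub>-\<^sub>1\<close> is an
  \<open>L\<close>-basis of \<open>M\<close>. Rescale them to \<open>Y\<^sub>k = \<sigma>\<^bsup>\<lceil>ks\<rceil>\<^esup> e\<^sub>k\<close> and let \<open>\<Lambda>\<close> be the \<open>O\<close>-span of
  \<open>Y\<^sub>0, \<dots>, Y\<^sub>d\<^sub>-\<^sub>1\<close>. Since the Newton polygon is the single segment from \<open>(0, -r)\<close> to \<open>(d, 0)\<close>,
  \<open>v(c\<^sub>j) \<ge> js - r\<close>, so solving the recurrence for its last or for its first term expresses
  \<open>Y\<^sub>k\<^sub>+\<^sub>d\<close>, resp. \<open>Y\<^sub>k\<close>, as an \<open>O\<close>-combination of the \<open>d\<close> terms in between; hence every \<open>Y\<^sub>k\<close>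
  lies in \<open>\<Lambda>\<close>. The map \<open>\<sigma>\<^sup>r t\<^sup>d\<close> sends \<open>Y\<^sub>k\<close> to \<open>Y\<^sub>k\<^sub>+\<^sub>d\<close>, so it maps \<open>\<Lambda>\<close> onto itself, and for
  \<open>s > 0\<close> the map \<open>t\<^sup>-\<^sup>1\<close> sends \<open>Y\<^sub>k\<close> to a multiple of \<open>Y\<^sub>k\<^sub>-\<^sub>1\<close> by a nonnegative power of \<open>\<sigma>\<close>.

  For uniqueness of the slope, the lattices \<open>\<sigma>\<^sup>N \<Lambda>\<close> form an exhaustive and separated
  filtration of \<open>M\<close>, and every \<open>O\<close>-lattice lies in one of its members. If \<open>F = \<sigma>\<^sup>w t\<^sup>u\<close>
  stabilises a lattice \<open>\<Lambda>'\<close>, then \<open>F\<^sup>d = \<sigma>\<^bsup>wd - ru\<^esup> (\<sigma>\<^sup>r t\<^sup>d)\<^sup>u\<close> with \<open>(\<sigma>\<^sup>r t\<^sup>d)\<^sup>u\<close> preserving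
  every \<open>\<sigma>\<^sup>N \<Lambda>\<close>; so if \<open>wd \<noteq> ru\<close>, iterating \<open>F\<close> or \<open>F\<^sup>-\<^sup>1\<close> pushes a nonzero vector of \<open>\<Lambda>'\<close>
  out of every member of the filtration while staying in \<open>\<Lambda>'\<close>.\<close>

section \<open>Discrete valuations\<close>

locale valuation =
  fixes val :: "'a::division_ring \<Rightarrow> int"
  assumes val: "discrete_valuation val"
begin

lemma val_mult: "x \<noteq> 0 \<Longrightarrow> y \<noteq> 0 \<Longrightarrow> val (x * y) = val x + val y"
  using val unfolding discrete_valuation_def by blast

lemma val_add_ge_min: "x \<noteq> 0 \<Longrightarrow> y \<noteq> 0 \<Longrightarrow> x + y \<noteq> 0 \<Longrightarrow> val (x + y) \<ge> min (val x) (val y)"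
  using val unfolding discrete_valuation_def by blast

lemma val_one: "val 1 = 0"
  using val_mult[of 1 1] by simp

lemma val_minus: "x \<noteq> 0 \<Longrightarrow> val (- x) = val x"
proof -
  have "val (-1) = 0" using val_mult[of "-1" "-1"] val_one by simp
  then show "x \<noteq> 0 \<Longrightarrow> val (- x) = val x" using val_mult[of "-1" x] by simp
qed

lemma val_inverse: "x \<noteq> 0 \<Longrightarrow> val (inverse x) = - val x"
  using val_mult[of x "inverse x"] val_one by simp

lemma mem_val_ring_iff: "x \<in> val_ring val \<longleftrightarrow> x = 0 \<or> 0 \<le> val x"
  by (simp add: val_ring_def)

lemma zero_in_val_ring [simp]: "0 \<in> val_ring val"
  by (simp add: mem_val_ring_iff)

lemma one_in_val_ring [simp]: "1 \<in> val_ring val"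
  by (simp add: mem_val_ring_iff val_one)

lemma val_ring_add: "x \<in> val_ring val \<Longrightarrow> y \<in> val_ring val \<Longrightarrow> x + y \<in> val_ring val"
  unfolding mem_val_ring_iff using val_add_ge_min[of x y] by fastforce

lemma val_ring_mult: "x \<in> val_ring val \<Longrightarrow> y \<in> val_ring val \<Longrightarrow> x * y \<in> val_ring val"
  unfolding mem_val_ring_iff using val_mult[of x y] by (cases "x = 0"; cases "y = 0") auto

lemma val_ring_uminus: "x \<in> val_ring val \<Longrightarrow> - x \<in> val_ring val"
  unfolding mem_val_ring_iff using val_minus[of x] by (cases "x = 0") auto

end

locale uniformizer = valuation val for val :: "'a::division_ring \<Rightarrow> int" +
  fixes \<sigma> :: 'a
  assumes uniformizer_nonzero: "\<sigma> \<noteq> 0" and val_uniformizer: "val \<sigma> = 1"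
begin

lemma val_uniformizer_powi: "val (\<sigma> powi k) = k"
proof -
  have val_pow: "val (\<sigma> ^ n) = int n" for n
    by (induction n) (auto simp: val_one val_mult uniformizer_nonzero val_uniformizer)
  show ?thesis
  proof (cases "k \<ge> 0")
    case True
    then show ?thesis using val_pow[of "nat k"] by (metis nat_0_le power_int_of_nat)
  next
    case False
    then have "\<sigma> powi k = inverse (\<sigma> ^ nat (- k))"
      by (metis power_int_minus minus_minus nat_0_le neg_0_le_iff_le nle_le power_int_of_nat)
    then show ?thesis using False val_pow[of "nat (- k)"] val_inverse uniformizer_nonzero by simp
  qed
qed

lemma uniformizer_powi_nonzero: "\<sigma> powi k \<noteq> 0"
  using uniformizer_nonzero by (simp add: power_int_not_zero)

lemma uniformizer_powi_add: "\<sigma> powi (a + b) = \<sigma> powi a * \<sigma> powi b"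
  using uniformizer_nonzero by (simp add: power_int_add)

lemma uniformizer_powi_cancel:
  "\<sigma> powi (- a) * \<sigma> powi a = 1" "\<sigma> powi a * \<sigma> powi (- a) = 1"
  "\<sigma> powi (- a) * (\<sigma> powi a * x) = x" "\<sigma> powi a * (\<sigma> powi (- a) * x) = x"
  "x * \<sigma> powi (- a) * \<sigma> powi a = x"
  using uniformizer_powi_add[of "- a" a] uniformizer_powi_add[of a "- a"]
  by (simp_all add: mult.assoc[symmetric]) (simp add: mult.assoc)

lemma uniformizer_powi_in_val_ring: "k \<ge> 0 \<Longrightarrow> \<sigma> powi k \<in> val_ring val"
  by (simp add: mem_val_ring_iff val_uniformizer_powi)

lemma rescale_in_val_ring: "x = 0 \<or> val x \<ge> b - a \<Longrightarrow> \<sigma> powi a * x * \<sigma> powi (- b) \<in> val_ring val"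
  unfolding mem_val_ring_iff
  using uniformizer_powi_nonzero val_mult val_uniformizer_powi by (cases "x = 0") auto

lemma conj_in_val_ring: "x \<in> val_ring val \<Longrightarrow> \<sigma> powi k * x * \<sigma> powi (- k) \<in> val_ring val"
  by (rule rescale_in_val_ring) (auto simp: mem_val_ring_iff)

end

lemma funpow_commuting: "(\<And>x. f (g x) = g (f x)) \<Longrightarrow> (f ^^ n) (g x) = g ((f ^^ n) x)"
  for f g :: "'m \<Rightarrow> 'm"
  by (induction n) simp_all

lemma additive_funpow: "Modules.additive (f :: 'm::ab_group_add \<Rightarrow> 'm) \<Longrightarrow> Modules.additive (f ^^ n)"
  by (induction n) (simp_all add: Modules.additive_def)

lemma additive_inv:
  fixes f :: "'m::ab_group_add \<Rightarrow> 'm"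
  assumes "bij f" "Modules.additive f" shows "Modules.additive (inv f)"
proof
  fix x y
  have "f (inv f x + inv f y) = x + y"
    using assms by (simp add: additive.add bij_is_surj surj_f_inv_f)
  then show "inv f (x + y) = inv f x + inv f y"
    using assms(1) by (metis bij_inv_eq_iff)
qed

lemma inv_commuting:
  assumes "bij f" "\<And>x. f (g x) = g (f x)" shows "inv f (g x) = g (inv f x)"
  using assms by (metis bij_inv_eq_iff)

definition int_funpow :: "('m \<Rightarrow> 'm) \<Rightarrow> int \<Rightarrow> 'm \<Rightarrow> 'm" where
  "int_funpow f u = (if 0 \<le> u then f ^^ nat u else inv f ^^ nat (- u))"

lemma int_funpow_succ:
  assumes "bij f" shows "int_funpow f (u + 1) = f \<circ> int_funpow f u"
proof (cases "0 \<le> u")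
  case True
  then have "nat (u + 1) = Suc (nat u)" by simp
  then show ?thesis using True by (simp add: int_funpow_def)
next
  case False
  then have "nat (- u) = Suc (nat (- (u + 1)))" by simp
  moreover have "f \<circ> (inv f ^^ Suc m) = inv f ^^ m" for m
    using assms by (simp add: fun_eq_iff bij_is_surj surj_f_inv_f)
  ultimately show ?thesis using False by (simp add: int_funpow_def)
qed

lemma int_funpow_pred:
  assumes "bij f" shows "int_funpow f (u - 1) = inv f \<circ> int_funpow f u"
proof (cases "0 < u")
  case True
  then have "nat u = Suc (nat (u - 1))" by simp
  moreover have "inv f \<circ> (f ^^ Suc m) = f ^^ m" for m
    using assms by (simp add: fun_eq_iff bij_is_inj)
  ultimately show ?thesis using True by (simp add: int_funpow_def)
next
  case False
  then have "nat (- (u - 1)) = Suc (nat (- u))" by simp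
  then show ?thesis using False by (simp add: int_funpow_def)
qed

lemma int_funpow_add:
  assumes "bij f" shows "int_funpow f (a + b) = int_funpow f a \<circ> int_funpow f b"
proof (induction a rule: int_induct[where k = 0])
  case base
  then show ?case by (simp add: int_funpow_def)
next
  case (step1 i)
  have "int_funpow f (i + 1 + b) = f \<circ> int_funpow f (i + b)"
    using int_funpow_succ[OF assms, of "i + b"] by (simp add: ac_simps)
  then show ?case using step1 int_funpow_succ[OF assms, of i] by (simp add: comp_assoc)
next
  case (step2 i)
  have "int_funpow f (i - 1 + b) = inv f \<circ> int_funpow f (i + b)"
    using int_funpow_pred[OF assms, of "i + b"] by (simp add: algebra_simps)
  then show ?case using step2 int_funpow_pred[OF assms, of i] by (simp add: comp_assoc)
qed

lemma int_funpow_commuting: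
  assumes "bij f" "\<And>x. f (g x) = g (f x)" shows "int_funpow f u (g x) = g (int_funpow f u x)"
  using funpow_commuting[of f g] funpow_commuting[of "inv f" g] inv_commuting[of f g, OF assms]
  by (simp add: int_funpow_def assms(2))

lemma additive_int_funpow: "bij f \<Longrightarrow> Modules.additive f \<Longrightarrow> Modules.additive (int_funpow f u)"
  by (simp add: int_funpow_def additive_funpow additive_inv)

lemma single_eq_scalar_times_power:
  "Poly_Mapping.single (n::nat) (a::'a::division_ring) = Poly_Mapping.single 0 a * Poly_Mapping.single 1 1 ^ n"
proof -
  have "Poly_Mapping.single (1::nat) (1::'a) ^ n = Poly_Mapping.single n 1" for n
    by (induction n) (auto simp: mult_single)
  then show ?thesis by (simp add: mult_single)
qed

locale L_module =
  fixes act :: "(nat \<Rightarrow>\<^sub>0 'a::division_ring) \<Rightarrow> 'm::ab_group_add \<Rightarrow> 'm"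
  assumes LM: "left_module act"
begin

lemma act_mult: "act (g * h) x = act g (act h x)"
  using LM unfolding left_module_def by blast

lemma act_one: "act 1 x = x"
  using LM unfolding left_module_def by blast

lemma additive_act_left: "Modules.additive (\<lambda>g. act g x)"
  using LM unfolding left_module_def Modules.additive_def by blast

lemma additive_act_right: "Modules.additive (act g)"
  using LM unfolding left_module_def Modules.additive_def by blast

lemmas act_sum_left = additive.sum[OF additive_act_left]

lemma additive_scal_left: "Modules.additive (\<lambda>a. scal act a x)"
  using additive.add[OF additive_act_left] by unfold_locales (simp add: scal_def single_add)

lemma additive_scal_right: "Modules.additive (scal act a)"
  unfolding scal_def by (rule additive_act_right)

lemma additive_tact: "Modules.additive (tact act)"
  unfolding tact_def by (rule additive_act_right)

lemmas scal_add_left = additive.add[OF additive_scal_left]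
  and scal_uminus_left = additive.minus[OF additive_scal_left]
  and scal_diff_left = additive.diff[OF additive_scal_left]
  and scal_zero_left [simp] = additive.zero[OF additive_scal_left]
  and scal_add_right = additive.add[OF additive_scal_right]
  and scal_uminus_right = additive.minus[OF additive_scal_right]
  and scal_zero_right [simp] = additive.zero[OF additive_scal_right]
  and scal_sum_right = additive.sum[OF additive_scal_right]

lemma scal_scal: "scal act a (scal act b x) = scal act (a * b) x"
  by (simp add: scal_def act_mult[symmetric] mult_single)

lemma scal_one [simp]: "scal act 1 x = x"
  by (simp add: scal_def act_one)

lemma tact_scal: "tact act (scal act a x) = scal act a (tact act x)"
  by (simp add: tact_def scal_def act_mult[symmetric] mult_single)

lemma tact_funpow_scal: "(tact act ^^ n) (scal act a x) = scal act a ((tact act ^^ n) x)"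
  by (rule funpow_commuting) (rule tact_scal)

lemma act_single: "act (Poly_Mapping.single n a) x = scal act a ((tact act ^^ n) x)"
proof -
  have "act (g ^ n) x = (act g ^^ n) x" for g
    by (induction n arbitrary: x) (auto simp: act_one act_mult)
  then show ?thesis by (simp add: single_eq_scalar_times_power[of n a] act_mult scal_def tact_def)
qed

end

locale O_module = valuation val + L_module act
  for val :: "'a::division_ring \<Rightarrow> int" and act :: "(nat \<Rightarrow>\<^sub>0 'a) \<Rightarrow> 'm::ab_group_add \<Rightarrow> 'm"
begin

lemma O_span_iff:
  "x \<in> O_span val act G \<longleftrightarrow> (\<exists>a. (\<forall>g\<in>G. a g \<in> val_ring val) \<and> x = (\<Sum>g\<in>G. scal act (a g) g))"
  unfolding O_span_def by blast

lemma zero_in_O_span: "0 \<in> O_span val act G"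
  unfolding O_span_iff by (rule exI[of _ "\<lambda>_. 0"]) simp

lemma O_span_add: "x \<in> O_span val act G \<Longrightarrow> y \<in> O_span val act G \<Longrightarrow> x + y \<in> O_span val act G"
  unfolding O_span_iff
proof (elim exE conjE)
  fix a b assume "\<forall>g\<in>G. a g \<in> val_ring val" "x = (\<Sum>g\<in>G. scal act (a g) g)"
    and "\<forall>g\<in>G. b g \<in> val_ring val" "y = (\<Sum>g\<in>G. scal act (b g) g)"
  then show "\<exists>c. (\<forall>g\<in>G. c g \<in> val_ring val) \<and> x + y = (\<Sum>g\<in>G. scal act (c g) g)"
    by (intro exI[of _ "\<lambda>g. a g + b g"]) (simp add: val_ring_add scal_add_left sum.distrib)
qed

lemma O_span_scal: "x \<in> O_span val act G \<Longrightarrow> b \<in> val_ring val \<Longrightarrow> scal act b x \<in> O_span val act G"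
  unfolding O_span_iff
proof (elim exE conjE)
  fix a assume "\<forall>g\<in>G. a g \<in> val_ring val" "x = (\<Sum>g\<in>G. scal act (a g) g)" "b \<in> val_ring val"
  then show "\<exists>c. (\<forall>g\<in>G. c g \<in> val_ring val) \<and> scal act b x = (\<Sum>g\<in>G. scal act (c g) g)"
    by (intro exI[of _ "\<lambda>g. b * a g"]) (simp add: val_ring_mult scal_sum_right scal_scal)
qed

lemma O_span_combination:
  assumes "\<And>i. i \<in> I \<Longrightarrow> b i \<in> val_ring val" "\<And>i. i \<in> I \<Longrightarrow> y i \<in> O_span val act G"
  shows "(\<Sum>i\<in>I. scal act (b i) (y i)) \<in> O_span val act G"
  using assms
  by (induction I rule: infinite_finite_induct) (auto simp: zero_in_O_span O_span_add O_span_scal)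

lemma generator_in_O_span: "finite G \<Longrightarrow> g \<in> G \<Longrightarrow> g \<in> O_span val act G"
  unfolding O_span_iff
  by (rule exI[of _ "\<lambda>h. if h = g then 1 else 0"])
     (auto simp: if_distrib[of "\<lambda>a. scal act a _"] cong: if_cong)

lemma semilinear_image_O_span_subset:
  assumes "finite G" and "Modules.additive F"
    and sc: "\<And>a x. F (scal act a x) = scal act (\<tau> a) (F x)"
    and \<tau>: "\<And>a. a \<in> val_ring val \<Longrightarrow> \<tau> a \<in> val_ring val"
    and gen: "\<And>g. g \<in> G \<Longrightarrow> F g \<in> O_span val act H"
  shows "F ` O_span val act G \<subseteq> O_span val act H"
proof
  fix y assume "y \<in> F ` O_span val act G"
  then obtain a where a: "\<forall>g\<in>G. a g \<in> val_ring val" and y: "y = F (\<Sum>g\<in>G. scal act (a g) g)"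
    unfolding O_span_def by blast
  have "y = (\<Sum>g\<in>G. scal act (\<tau> (a g)) (F g))"
    using y by (simp add: additive.sum[OF \<open>Modules.additive F\<close>] sc)
  also have "\<dots> \<in> O_span val act H"
    using a \<tau> gen by (intro O_span_combination) auto
  finally show "y \<in> O_span val act H" .
qed

lemma O_span_image_coeffs:
  assumes "finite I" and "x \<in> O_span val act (y ` I)"
  shows "\<exists>b. (\<forall>i\<in>I. b i \<in> val_ring val) \<and> x = (\<Sum>i\<in>I. scal act (b i) (y i))"
proof -
  obtain a where a: "\<forall>g\<in>y ` I. a g \<in> val_ring val" and x: "x = (\<Sum>g\<in>y ` I. scal act (a g) g)"
    using assms(2) unfolding O_span_iff by blast
  define R where "R = inv_into I y ` (y ` I)"
  have "R \<subseteq> I" unfolding R_def by (auto intro: inv_into_into)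
  define b where "b i = (if i \<in> R then a (y i) else 0)" for i
  have "(\<Sum>i\<in>I. scal act (b i) (y i)) = (\<Sum>i\<in>R. scal act (a (y i)) (y i))"
    using assms(1) \<open>R \<subseteq> I\<close>
    by (intro sum.mono_neutral_cong_right) (auto simp: b_def)
  also have "\<dots> = (\<Sum>g\<in>y ` I. scal act (a (y (inv_into I y g))) (y (inv_into I y g)))"
    unfolding R_def by (rule sum.reindex[unfolded comp_def]) (rule inj_on_inv_into, simp)
  also have "\<dots> = x" unfolding x by (rule sum.cong) (auto simp: f_inv_into_f)
  finally have "x = (\<Sum>i\<in>I. scal act (b i) (y i))" ..
  moreover have "\<forall>i\<in>I. b i \<in> val_ring val" using a by (auto simp: b_def)
  ultimately show ?thesis by blast
qed

end

section \<open>The monic polynomial and its Newton polygon\<close>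

definition monic_coeff :: "(nat \<Rightarrow> 'a::division_ring) \<Rightarrow> nat \<Rightarrow> nat \<Rightarrow> 'a" where
  "monic_coeff c d j = (if j < d then c j else 1)"

lemma monic_poly_eq_sum: "monic_poly c d = (\<Sum>j\<le>d. Poly_Mapping.single j (monic_coeff c d j))"
  unfolding monic_poly_def monic_coeff_def by (simp add: lessThan_Suc_atMost[symmetric])

lemma lookup_monic_poly: "Poly_Mapping.lookup (monic_poly c d) i = (if i \<le> d then monic_coeff c d i else 0)"
  unfolding monic_poly_eq_sum by (simp add: lookup_sum lookup_single when_def)

lemma poly_mapping_eq_sum_single:
  "(g :: nat \<Rightarrow>\<^sub>0 'a::division_ring) = (\<Sum>k\<in>Poly_Mapping.keys g. Poly_Mapping.single k (Poly_Mapping.lookup g k))"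
  by (rule poly_mapping_eqI) (simp add: lookup_sum lookup_single when_def in_keys_iff)

lemma lookup_mult_monic_poly_top:
  fixes h :: "nat \<Rightarrow>\<^sub>0 'a::division_ring"
  assumes "h \<noteq> 0"
  defines "n \<equiv> Max (Poly_Mapping.keys h)"
  shows "Poly_Mapping.lookup (h * monic_poly c d) (n + d) = Poly_Mapping.lookup h n"
proof -
  define K where "K = Poly_Mapping.keys h"
  have K: "finite K" "n \<in> K" "\<And>k. k \<in> K \<Longrightarrow> k \<le> n"
    using assms by (auto simp: n_def K_def)
  have "h * monic_poly c d
      = (\<Sum>k\<in>K. \<Sum>j\<le>d. Poly_Mapping.single (k + j) (Poly_Mapping.lookup h k * monic_coeff c d j))"
    by (subst poly_mapping_eq_sum_single[of h])
      (simp add: monic_poly_eq_sum K_def sum_distrib_left sum_distrib_right mult_single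
        sum.swap[of _ "{..d}"])
  then have "Poly_Mapping.lookup (h * monic_poly c d) (n + d)
      = (\<Sum>k\<in>K. \<Sum>j\<le>d. if k = n \<and> j = d then Poly_Mapping.lookup h k * monic_coeff c d j else 0)"
  proof -
    have "k = n \<and> j = d" if "k \<in> K" "j \<le> d" "k + j = n + d" for k j
      using K(3)[OF that(1)] that(2,3) by linarith
    then show ?thesis
      unfolding \<open>h * monic_poly c d = _\<close> lookup_sum
      by (intro sum.cong refl) (auto simp: lookup_single when_def)
  qed
  also have "\<dots> = (\<Sum>k\<in>K. if k = n then Poly_Mapping.lookup h k * monic_coeff c d d else 0)"
    by (intro sum.cong refl) simp
  also have "\<dots> = Poly_Mapping.lookup h n"
    using K(1,2) by (simp add: monic_coeff_def)
  finally show ?thesis .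
qed

definition hull_values :: "nat set \<Rightarrow> (nat \<Rightarrow> real) \<Rightarrow> real \<Rightarrow> real set" where
  "hull_values K V x = {(\<Sum>i\<in>K. l i * V i) | l.
     (\<forall>i. 0 \<le> l i) \<and> (\<Sum>i\<in>K. l i) = 1 \<and> (\<Sum>i\<in>K. l i * real i) = x}"

lemma newton_polygon_eq_Inf_hull_values:
  "newton_polygon val f x
     = Inf (hull_values (Poly_Mapping.keys f) (\<lambda>i. real_of_int (val (Poly_Mapping.lookup f i))) x)"
  unfolding newton_polygon_def hull_values_def ..

lemma weighted_sum_concentrated:
  assumes "finite K" "j \<in> K" "(\<Sum>i\<in>K. l i) = (1::real)" "\<And>i. i \<in> K \<Longrightarrow> i \<noteq> j \<Longrightarrow> l i = 0"
  shows "(\<Sum>i\<in>K. l i * V i) = V j"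
proof -
  have "(\<Sum>i\<in>K. l i) = l j" "(\<Sum>i\<in>K. l i * V i) = l j * V j"
    using assms(1,2,4) by (simp_all add: sum.remove)
  then show ?thesis using assms(3) by simp
qed

lemma value_in_hull_values:
  assumes "finite K" "j \<in> K"
  shows "V j \<in> hull_values K V (real j)"
proof -
  let ?l = "\<lambda>i. if i = j then 1 else (0::real)"
  have "(\<Sum>i\<in>K. ?l i * V i) = V j" using assms by (intro weighted_sum_concentrated) auto
  moreover have "(\<Sum>i\<in>K. ?l i) = 1" "(\<Sum>i\<in>K. ?l i * real i) = real j" using assms
    by (simp_all add: if_distrib[of "\<lambda>a. a * _"] cong: if_cong)
  ultimately show ?thesis unfolding hull_values_def by (intro CollectI exI[of _ ?l]) auto
qed

lemma hull_values_at_extreme: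
  assumes "finite K" "j \<in> K" and extreme: "(\<forall>i\<in>K. j \<le> i) \<or> (\<forall>i\<in>K. i \<le> j)"
  shows "hull_values K V (real j) = {V j}"
proof
  show "{V j} \<subseteq> hull_values K V (real j)" using value_in_hull_values[OF assms(1,2)] by simp
  show "hull_values K V (real j) \<subseteq> {V j}"
  proof
    fix y assume "y \<in> hull_values K V (real j)"
    then obtain l where l: "\<forall>i. 0 \<le> l i" "(\<Sum>i\<in>K. l i) = 1" "(\<Sum>i\<in>K. l i * real i) = real j"
      and y: "y = (\<Sum>i\<in>K. l i * V i)" unfolding hull_values_def by blast
    have "(\<Sum>i\<in>K. l i * (real i - real j)) = (\<Sum>i\<in>K. l i * real i) - real j * (\<Sum>i\<in>K. l i)"
      by (simp add: right_diff_distrib sum_subtractf sum_distrib_left mult.commute)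
    then have balanced: "(\<Sum>i\<in>K. l i * (real i - real j)) = 0" using l(2,3) by simp
    have "(\<Sum>i\<in>K. l i * \<bar>real i - real j\<bar>) = 0"
      using extreme
    proof
      assume "\<forall>i\<in>K. j \<le> i"
      then have "(\<Sum>i\<in>K. l i * \<bar>real i - real j\<bar>) = (\<Sum>i\<in>K. l i * (real i - real j))"
        by (intro sum.cong) auto
      then show ?thesis using balanced by simp
    next
      assume "\<forall>i\<in>K. i \<le> j"
      then have "(\<Sum>i\<in>K. l i * \<bar>real i - real j\<bar>) = (\<Sum>i\<in>K. - (l i * (real i - real j)))"
        by (intro sum.cong) (auto simp: algebra_simps)
      then show ?thesis using balanced by (simp add: sum_negf)
    qed
    then have "\<forall>i\<in>K. l i * \<bar>real i - real j\<bar> = 0"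
      using l(1) assms(1) by (subst sum_nonneg_eq_0_iff[symmetric]) auto
    then have "l i = 0" if "i \<in> K" "i \<noteq> j" for i using that by auto
    then show "y \<in> {V j}" using y assms(1,2) l(2) by (simp add: weighted_sum_concentrated)
  qed
qed

lemma Inf_hull_values_le:
  assumes "finite K" "j \<in> K"
  shows "Inf (hull_values K V (real j)) \<le> V j"
proof (rule cInf_lower[OF value_in_hull_values[OF assms]])
  have "Min (V ` K) \<le> y" if hull: "y \<in> hull_values K V (real j)" for y
  proof -
    obtain l where y: "y = (\<Sum>i\<in>K. l i * V i)" and l: "\<forall>i. 0 \<le> l i" "(\<Sum>i\<in>K. l i) = 1"
      using hull unfolding hull_values_def by blast
    have "(\<Sum>i\<in>K. l i * Min (V ` K)) \<le> (\<Sum>i\<in>K. l i * V i)"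
    proof (rule sum_mono)
      fix i assume "i \<in> K"
      then show "l i * Min (V ` K) \<le> l i * V i" using assms(1) l(1) by (simp add: mult_left_mono)
    qed
    then show ?thesis using l(2) y by (simp add: sum_distrib_right[symmetric])
  qed
  then show "bdd_below (hull_values K V (real j))" by (rule bdd_belowI)
qed

text \<open>The single edge joins \<open>(0, v(c\<^sub>0))\<close> to \<open>(d, v(1)) = (d, 0)\<close>, hence
  \<open>v(c\<^sub>0) = -ds = -r\<close> and every \<open>(j, v(c\<^sub>j))\<close> lies on or above it.\<close>

lemma newton_single_edge_val_bounds:
  fixes val :: "'a::division_ring \<Rightarrow> int"
  assumes val: "discrete_valuation val" and d: "d \<ge> 1" and c0: "c 0 \<noteq> 0"
    and NP: "newton_single_edge val (monic_poly c d) s" and r: "real_of_int r = real d * s"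
  shows "val (c 0) = - r"
    and "j < d \<Longrightarrow> c j \<noteq> 0 \<Longrightarrow> real_of_int (val (c j)) \<ge> real j * s - r"
proof -
  interpret valuation val by (rule valuation.intro[OF val])
  let ?f = "monic_poly c d"
  let ?K = "Poly_Mapping.keys ?f"
  let ?V = "\<lambda>i. real_of_int (val (Poly_Mapping.lookup ?f i))"
  have inK: "i \<in> ?K \<longleftrightarrow> i \<le> d \<and> monic_coeff c d i \<noteq> 0" for i
    by (simp add: in_keys_iff lookup_monic_poly)
  have K: "finite ?K" "0 \<in> ?K" "d \<in> ?K"
    using c0 d by (auto simp: inK monic_coeff_def)
  then have "Min ?K = 0" "Max ?K = d" by (auto intro!: Min_eqI Max_eqI simp: inK)
  then obtain b where b: "\<And>x. x \<in> {0..real d} \<Longrightarrow> newton_polygon val ?f x = b + s * x"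
    using NP unfolding newton_single_edge_def by auto
  have V0: "?V 0 = real_of_int (val (c 0))" and Vd: "?V d = 0"
    using d by (simp_all add: lookup_monic_poly monic_coeff_def val_one)
  have "hull_values ?K ?V (real 0) = {?V 0}"
    by (rule hull_values_at_extreme) (use K in auto)
  moreover have "hull_values ?K ?V (real d) = {?V d}"
    by (rule hull_values_at_extreme) (use K in \<open>auto simp: inK\<close>)
  ultimately have "newton_polygon val ?f 0 = ?V 0" "newton_polygon val ?f (real d) = ?V d"
    unfolding newton_polygon_eq_Inf_hull_values by simp_all
  then have b0: "b = real_of_int (val (c 0))" and v0: "real_of_int (val (c 0)) = - real d * s"
    using b[of 0] b[of "real d"] V0 Vd by (simp_all add: algebra_simps)
  have "real_of_int (val (c 0)) = real_of_int (- r)" using v0 r by simp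
  then show "val (c 0) = - r" by (simp only: of_int_eq_iff)
  assume j: "j < d" "c j \<noteq> 0"
  then have "newton_polygon val ?f (real j) \<le> ?V j"
    unfolding newton_polygon_eq_Inf_hull_values
    by (intro Inf_hull_values_le) (auto simp: inK monic_coeff_def)
  moreover have "?V j = real_of_int (val (c j))"
    using j by (simp add: lookup_monic_poly monic_coeff_def)
  ultimately have "b + s * real j \<le> real_of_int (val (c j))" using b[of "real j"] j by simp
  then show "real_of_int (val (c j)) \<ge> real j * s - r" using b0 v0 r by (simp add: mult.commute)
qed

section \<open>Rescaled solutions of the recurrence\<close>

definition ceil_slope :: "real \<Rightarrow> int \<Rightarrow> int" where
  "ceil_slope s k = \<lceil>of_int k * s\<rceil>"

definition scaled_seq ::
    "((nat \<Rightarrow>\<^sub>0 'a::division_ring) \<Rightarrow> 'm \<Rightarrow> 'm) \<Rightarrow> 'a \<Rightarrow> real \<Rightarrow> (int \<Rightarrow> 'm) \<Rightarrow> int \<Rightarrow> 'm" where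
  "scaled_seq act \<sigma> s E k = scal act (\<sigma> powi ceil_slope s k) (E k)"

definition recurrence_at ::
    "((nat \<Rightarrow>\<^sub>0 'a::division_ring) \<Rightarrow> 'm::ab_group_add \<Rightarrow> 'm) \<Rightarrow> (nat \<Rightarrow> 'a) \<Rightarrow> nat \<Rightarrow> (int \<Rightarrow> 'm) \<Rightarrow> int \<Rightarrow> bool" where
  "recurrence_at act c d E k \<longleftrightarrow> (\<Sum>j\<le>d. scal act (monic_coeff c d j) (E (k + int j))) = 0"

lemma ceil_slope_diff_forward:
  assumes "real_of_int r = real d * s" "real_of_int v \<ge> real j * s - r"
  shows "v \<ge> ceil_slope s (k + int j) - ceil_slope s (k + int d)"
proof -
  have "of_int (ceil_slope s (k + int j)) < (of_int k + j) * s + 1"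
    "of_int (ceil_slope s (k + int d)) \<ge> (of_int k + d) * s"
    unfolding ceil_slope_def
    using ceiling_correct[of "(of_int k + j) * s"] ceiling_correct[of "(of_int k + d) * s"] by auto
  then show ?thesis using assms by (simp add: algebra_simps)
qed

lemma ceil_slope_diff_backward:
  assumes "real_of_int v \<ge> real j * s"
  shows "v \<ge> ceil_slope s (k + int j) - ceil_slope s k"
proof -
  have "of_int (ceil_slope s (k + int j)) < (of_int k + j) * s + 1" "of_int (ceil_slope s k) \<ge> of_int k * s"
    unfolding ceil_slope_def
    using ceiling_correct[of "(of_int k + j) * s"] ceiling_correct[of "of_int k * s"] by auto
  then show ?thesis using assms by (simp add: algebra_simps)
qed

lemma ceil_slope_shift:
  assumes "real_of_int r = real d * s"
  shows "ceil_slope s (i + int d * k) = ceil_slope s i + r * k"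
proof -
  have "of_int (i + int d * k) * s = of_int i * s + of_int (r * k)" using assms by (simp add: algebra_simps)
  then show ?thesis unfolding ceil_slope_def by (simp only: ceiling_add_of_int)
qed

locale newton_recurrence = uniformizer val \<sigma> + O_module val act
  for val :: "'a::division_ring \<Rightarrow> int" and \<sigma> :: 'a and act :: "(nat \<Rightarrow>\<^sub>0 'a) \<Rightarrow> 'm::ab_group_add \<Rightarrow> 'm" +
  fixes c :: "nat \<Rightarrow> 'a" and d :: nat and s :: real and r :: int
  assumes d_pos: "d \<ge> 1" and c0: "c 0 \<noteq> 0"
    and newton: "newton_single_edge val (monic_poly c d) s" and r: "real_of_int r = real d * s"
begin

abbreviation Y :: "(int \<Rightarrow> 'm) \<Rightarrow> int \<Rightarrow> 'm" where
  "Y \<equiv> scaled_seq act \<sigma> s"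

abbreviation initial_span :: "(int \<Rightarrow> 'm) \<Rightarrow> 'm set" where
  "initial_span E \<equiv> O_span val act (Y E ` {0..<int d})"

lemma val_c0: "val (c 0) = - r"
  by (rule newton_single_edge_val_bounds(1)[OF val d_pos c0 newton r])

lemma val_monic_coeff_ge: "j \<le> d \<Longrightarrow> monic_coeff c d j \<noteq> 0 \<Longrightarrow> real_of_int (val (monic_coeff c d j)) \<ge> real j * s - r"
  using newton_single_edge_val_bounds(2)[OF val d_pos c0 newton r, of j] r val_one
  by (cases "j < d") (auto simp: monic_coeff_def)

lemma seq_eq_unscale: "E k = scal act (\<sigma> powi (- ceil_slope s k)) (Y E k)"
  by (simp add: scaled_seq_def scal_scal uniformizer_powi_cancel)

lemma scal_eq_scal_Y: "scal act a (E k) = scal act (a * \<sigma> powi (- ceil_slope s k)) (Y E k)"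
  by (simp add: scaled_seq_def scal_scal mult.assoc uniformizer_powi_cancel)

lemma scaled_seq_forward_step:
  assumes "recurrence_at act c d E k"
  shows "Y E (k + int d) = (\<Sum>j<d. scal act
      (- (\<sigma> powi ceil_slope s (k + int d) * monic_coeff c d j * \<sigma> powi (- ceil_slope s (k + int j))))
      (Y E (k + int j)))"
proof -
  have "(\<Sum>j<d. scal act (monic_coeff c d j) (E (k + int j))) + E (k + int d) = 0"
    using assms by (simp add: recurrence_at_def lessThan_Suc_atMost[symmetric] monic_coeff_def)
  then have "E (k + int d) = - (\<Sum>j<d. scal act (monic_coeff c d j) (E (k + int j)))"
    by (simp add: eq_neg_iff_add_eq_0 add.commute)
  then have "Y E (k + int d) = (\<Sum>j<d. scal act
      (- (\<sigma> powi ceil_slope s (k + int d) * monic_coeff c d j)) (E (k + int j)))"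
    by (simp add: scaled_seq_def scal_uminus_right scal_uminus_left scal_sum_right scal_scal sum_negf)
  then show ?thesis
    by (simp add: scal_eq_scal_Y[where E = E])
qed

lemma forward_step_coeff_in_val_ring:
  "j < d \<Longrightarrow> \<sigma> powi ceil_slope s (k + int d) * monic_coeff c d j * \<sigma> powi (- ceil_slope s (k + int j)) \<in> val_ring val"
  using val_monic_coeff_ge[of j] ceil_slope_diff_forward[OF r, where v = "val (monic_coeff c d j)" and j = j and k = k]
  by (intro rescale_in_val_ring) force

lemma scaled_seq_backward_step:
  assumes "recurrence_at act c d E k"
  shows "Y E k = (\<Sum>j<d. scal act
      (- (\<sigma> powi ceil_slope s k * (inverse (c 0) * monic_coeff c d (Suc j)) * \<sigma> powi (- ceil_slope s (k + int (Suc j)))))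
      (Y E (k + int (Suc j))))"
proof -
  obtain d' where d': "d = Suc d'" using d_pos by (cases d) auto
  have "(\<Sum>j\<le>d. scal act (monic_coeff c d j) (E (k + int j)))
      = scal act (monic_coeff c d 0) (E (k + int 0))
        + (\<Sum>j<d. scal act (monic_coeff c d (Suc j)) (E (k + int (Suc j))))"
    by (simp only: d' sum.atMost_Suc_shift lessThan_Suc_atMost)
  moreover have "monic_coeff c d 0 = c 0" using d_pos by (simp add: monic_coeff_def)
  ultimately have "scal act (c 0) (E k) + (\<Sum>j<d. scal act (monic_coeff c d (Suc j)) (E (k + int (Suc j)))) = 0"
    using assms unfolding recurrence_at_def by simp
  then have "scal act (c 0) (E k) = - (\<Sum>j<d. scal act (monic_coeff c d (Suc j)) (E (k + int (Suc j))))"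
    by (simp add: eq_neg_iff_add_eq_0)
  then have "scal act (inverse (c 0)) (scal act (c 0) (E k))
      = scal act (inverse (c 0)) (- (\<Sum>j<d. scal act (monic_coeff c d (Suc j)) (E (k + int (Suc j)))))"
    by simp
  then have "E k = - (\<Sum>j<d. scal act (inverse (c 0) * monic_coeff c d (Suc j)) (E (k + int (Suc j))))"
    using c0 by (simp add: scal_scal scal_uminus_right scal_sum_right)
  then have "Y E k = (\<Sum>j<d. scal act
      (- (\<sigma> powi ceil_slope s k * (inverse (c 0) * monic_coeff c d (Suc j)))) (E (k + int (Suc j))))"
    by (simp add: scaled_seq_def scal_uminus_right scal_uminus_left scal_sum_right scal_scal sum_negf)
  then show ?thesis
    by (simp add: scal_eq_scal_Y[where E = E])
qed

lemma backward_step_coeff_in_val_ring: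
  assumes "j < d"
  shows "\<sigma> powi ceil_slope s k * (inverse (c 0) * monic_coeff c d (Suc j)) * \<sigma> powi (- ceil_slope s (k + int (Suc j)))
    \<in> val_ring val"
proof (rule rescale_in_val_ring)
  have "monic_coeff c d (Suc j) \<noteq> 0 \<Longrightarrow>
      val (inverse (c 0) * monic_coeff c d (Suc j)) = r + val (monic_coeff c d (Suc j))"
    using c0 val_mult val_inverse val_c0 by simp
  then have "inverse (c 0) * monic_coeff c d (Suc j) = 0
      \<or> real_of_int (val (inverse (c 0) * monic_coeff c d (Suc j))) \<ge> real (Suc j) * s"
    using val_monic_coeff_ge[of "Suc j"] assms by fastforce
  then show "inverse (c 0) * monic_coeff c d (Suc j) = 0
      \<or> ceil_slope s (k + int (Suc j)) - ceil_slope s k \<le> val (inverse (c 0) * monic_coeff c d (Suc j))"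
    using ceil_slope_diff_backward by blast
qed

lemma scaled_seq_nonneg_in_initial_span:
  assumes rec: "\<And>k. 0 \<le> k \<Longrightarrow> recurrence_at act c d E k"
  shows "Y E (int n) \<in> initial_span E"
proof (induction n rule: less_induct)
  case (less n)
  show ?case
  proof (cases "n < d")
    case True
    then show ?thesis by (intro generator_in_O_span) auto
  next
    case False
    define k where "k = int n - int d"
    have k: "0 \<le> k" "int n = k + int d" using False by (auto simp: k_def)
    have "Y E (k + int j) \<in> initial_span E" if "j < d" for j
      using less[of "nat (k + int j)"] k that by simp
    then show ?thesis
      unfolding k(2) scaled_seq_forward_step[OF rec[OF k(1)]]
      by (intro O_span_combination val_ring_uminus forward_step_coeff_in_val_ring) auto
  qed
qed

lemma scaled_seq_in_initial_span:
  assumes rec: "\<And>k. recurrence_at act c d E k"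
  shows "Y E k \<in> initial_span E"
proof (cases "k \<ge> 0")
  case True
  then show ?thesis using scaled_seq_nonneg_in_initial_span[OF rec, of "nat k"] by simp
next
  case False
  have "Y E (- int m - 1) \<in> initial_span E" for m
  proof (induction m rule: less_induct)
    case (less m)
    have "Y E (- int m - 1 + int (Suc j)) \<in> initial_span E" for j
    proof (cases "- int m - 1 + int (Suc j) \<ge> 0")
      case True
      then show ?thesis using scaled_seq_nonneg_in_initial_span[OF rec, of "nat (- int m - 1 + int (Suc j))"] by simp
    next
      case False
      then have "- int m - 1 + int (Suc j) = - int (m - Suc j) - 1" "m - Suc j < m" by linarith+
      then show ?thesis using less by metis
    qed
    then show ?case
      by (subst scaled_seq_backward_step[OF rec])
        (intro O_span_combination val_ring_uminus backward_step_coeff_in_val_ring, auto)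
  qed
  from this[of "nat (- k - 1)"] False show ?thesis by simp
qed

end

definition t_orbit :: "((nat \<Rightarrow>\<^sub>0 'a::division_ring) \<Rightarrow> 'm \<Rightarrow> 'm) \<Rightarrow> 'm \<Rightarrow> nat \<Rightarrow> 'm" where
  "t_orbit act m n = (tact act ^^ n) m"

locale newton_cyclic_module = newton_recurrence val \<sigma> act c d s r
  for val :: "'a::division_ring \<Rightarrow> int" and \<sigma> :: 'a
    and act :: "(nat \<Rightarrow>\<^sub>0 'a) \<Rightarrow> 'm::ab_group_add \<Rightarrow> 'm" and c d s r +
  fixes m0 :: 'm
  assumes annihilator: "\<And>g. act g m0 = 0 \<longleftrightarrow> (\<exists>h. g = h * monic_poly c d)"
    and generates: "\<And>x. \<exists>g. x = act g m0"
begin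

abbreviation e :: "nat \<Rightarrow> 'm" where
  "e \<equiv> t_orbit act m0"

lemma e_0: "e 0 = m0" and e_Suc: "e (Suc i) = tact act (e i)"
  by (simp_all add: t_orbit_def)

lemma act_poly_eq_sum: "act g m0 = (\<Sum>k\<in>Poly_Mapping.keys g. scal act (Poly_Mapping.lookup g k) (e k))"
  by (subst poly_mapping_eq_sum_single[of g]) (simp add: act_sum_left act_single t_orbit_def)

lemma t_orbit_recurrence: "(\<Sum>j\<le>d. scal act (monic_coeff c d j) (e (n + j))) = 0"
proof -
  have "(\<Sum>j\<le>d. scal act (monic_coeff c d j) (e j)) = act (monic_poly c d) m0"
    unfolding monic_poly_eq_sum act_sum_left act_single t_orbit_def ..
  also have "\<dots> = 0" using annihilator[of "monic_poly c d"] by (metis mult_1)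
  finally have "(tact act ^^ n) (\<Sum>j\<le>d. scal act (monic_coeff c d j) (e j)) = 0"
    using additive.zero[OF additive_funpow[OF additive_tact]] by simp
  then show ?thesis
    by (simp add: additive.sum[OF additive_funpow[OF additive_tact]] tact_funpow_scal
        t_orbit_def funpow_add)
qed

lemma t_orbit_top: "e d = - (\<Sum>j<d. scal act (c j) (e j))"
proof -
  have "(\<Sum>j<d. scal act (c j) (e j)) + e d = 0"
    using t_orbit_recurrence[of 0] by (simp add: lessThan_Suc_atMost[symmetric] monic_coeff_def)
  then show ?thesis by (simp add: eq_neg_iff_add_eq_0 add.commute)
qed

definition basis_span :: "'m set" where
  "basis_span = {x. \<exists>\<beta>. x = (\<Sum>i<d. scal act (\<beta> i) (e i))}"

lemma basis_span_combination: "(\<And>i. i \<in> S \<Longrightarrow> y i \<in> basis_span) \<Longrightarrow> (\<Sum>i\<in>S. scal act (b i) (y i)) \<in> basis_span"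
proof (induction S rule: infinite_finite_induct)
  case (insert i S)
  obtain \<alpha> \<beta> where "y i = (\<Sum>j<d. scal act (\<alpha> j) (e j))" "(\<Sum>i\<in>S. scal act (b i) (y i)) = (\<Sum>j<d. scal act (\<beta> j) (e j))"
    using insert unfolding basis_span_def by blast
  then show ?case using insert(1,2) unfolding basis_span_def
    by (intro CollectI exI[of _ "\<lambda>j. b i * \<alpha> j + \<beta> j"])
      (simp add: scal_add_left scal_sum_right scal_scal sum.distrib)
qed (auto simp: basis_span_def intro: exI[of _ "\<lambda>_. 0"])

lemma basis_span_scal: "x \<in> basis_span \<Longrightarrow> scal act a x \<in> basis_span"
  using basis_span_combination[of "{()}" "\<lambda>_. x" "\<lambda>_. a"] by simp

lemma t_orbit_initial_in_basis_span: "i < d \<Longrightarrow> e i \<in> basis_span"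
  unfolding basis_span_def
  by (intro CollectI exI[of _ "\<lambda>j. if j = i then 1 else 0"])
    (simp add: if_distrib[of "\<lambda>a. scal act a _"] cong: if_cong)

text \<open>Every \<open>e\<^sub>k\<close> lies in the span of \<open>e\<^sub>0, \<dots>, e\<^sub>d\<^sub>-\<^sub>1\<close>: apply the forward recurrence step to the
  sequence \<open>k \<mapsto> e\<^bsub>nat k\<^esub>\<close>, which satisfies the recurrence at all \<open>k \<ge> 0\<close>.\<close>

lemma t_orbit_in_basis_span: "e k \<in> basis_span"
proof -
  let ?E = "\<lambda>k::int. e (nat k)"
  have "recurrence_at act c d ?E k" if "0 \<le> k" for k
    unfolding recurrence_at_def using t_orbit_recurrence[of "nat k"] that by (simp add: nat_add_distrib)
  then have "Y ?E (int k) \<in> initial_span ?E" by (rule scaled_seq_nonneg_in_initial_span)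
  then obtain b where "Y ?E (int k) = (\<Sum>i\<in>{0..<int d}. scal act (b i) (Y ?E i))"
    using O_span_image_coeffs by blast
  moreover have "Y ?E i \<in> basis_span" if "i \<in> {0..<int d}" for i
    using that t_orbit_initial_in_basis_span[of "nat i"] by (auto simp: scaled_seq_def basis_span_scal)
  ultimately have "Y ?E (int k) \<in> basis_span" by (auto intro!: basis_span_combination)
  then show ?thesis
    using seq_eq_unscale[of ?E "int k"] basis_span_scal by auto
qed

lemma basis_coords: "\<exists>\<beta>. x = (\<Sum>i<d. scal act (\<beta> i) (e i))"
proof -
  obtain g where "x = act g m0" using generates by blast
  then have "x \<in> basis_span"
    by (simp add: act_poly_eq_sum basis_span_combination t_orbit_in_basis_span)
  then show ?thesis unfolding basis_span_def by blast
qed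

text \<open>Independence: a relation of degree \<open>< d\<close> would be a multiple of the monic
  polynomial \<open>f\<close> of degree \<open>d\<close>.\<close>

lemma basis_independent:
  assumes "(\<Sum>i<d. scal act (\<beta> i) (e i)) = 0" "i < d"
  shows "\<beta> i = 0"
proof -
  define p where "p = (\<Sum>i<d. Poly_Mapping.single i (\<beta> i))"
  have lookup_p: "Poly_Mapping.lookup p k = (if k < d then \<beta> k else 0)" for k
    unfolding p_def lookup_sum by (simp add: lookup_single when_def)
  have "act p m0 = 0"
    using assms(1) unfolding p_def by (simp add: act_sum_left act_single t_orbit_def)
  then obtain h where h: "p = h * monic_poly c d" using annihilator by blast
  have "h = 0"
  proof (rule ccontr)
    assume "h \<noteq> 0"
    define n where "n = Max (Poly_Mapping.keys h)"
    have "Poly_Mapping.lookup h n \<noteq> 0"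
      using \<open>h \<noteq> 0\<close> unfolding n_def by (simp add: in_keys_iff[symmetric])
    moreover have "Poly_Mapping.lookup p (n + d) = Poly_Mapping.lookup h n"
      unfolding h n_def by (rule lookup_mult_monic_poly_top[OF \<open>h \<noteq> 0\<close>])
    ultimately show False using lookup_p[of "n + d"] by simp
  qed
  then show ?thesis using h lookup_p[of i] assms(2) by simp
qed

lemma basis_coords_unique:
  assumes "(\<Sum>i<d. scal act (\<beta> i) (e i)) = (\<Sum>i<d. scal act (\<gamma> i) (e i))" "i < d"
  shows "\<beta> i = \<gamma> i"
  using basis_independent[of "\<lambda>i. \<beta> i - \<gamma> i" i] assms by (simp add: scal_diff_left sum_subtractf)

lemma generator_nonzero: "m0 \<noteq> 0"
proof
  assume "m0 = 0"
  then have "(\<Sum>i<d. scal act (if i = 0 then 1 else 0) (e i)) = 0"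
    using d_pos by (simp add: if_distrib[of "\<lambda>a. scal act a _"] t_orbit_def cong: if_cong)
  from basis_independent[OF this, of 0] d_pos show False by simp
qed

text \<open>In the coordinates \<open>e\<^sub>0, \<dots>, e\<^sub>d\<^sub>-\<^sub>1\<close>, \<open>t\<close> acts by the companion matrix of \<open>f\<close>, which is
  invertible because \<open>c\<^sub>0 \<noteq> 0\<close>.\<close>

lemma tact_kernel:
  assumes "tact act x = 0" shows "x = 0"
proof -
  obtain d' where d': "d = Suc d'" using d_pos by (cases d) auto
  obtain \<beta> where x: "x = (\<Sum>i<d. scal act (\<beta> i) (e i))" using basis_coords by blast
  define \<gamma> where "\<gamma> i = (if i = 0 then 0 else \<beta> (i - 1)) - \<beta> d' * c i" for i
  have "tact act x = (\<Sum>i<d. scal act (\<beta> i) (e (Suc i)))"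
    unfolding x by (simp add: additive.sum[OF additive_tact] tact_scal e_Suc)
  also have "\<dots> = (\<Sum>i<d'. scal act (\<beta> i) (e (Suc i))) + scal act (\<beta> d') (e d)"
    by (simp add: d')
  also have "(\<Sum>i<d'. scal act (\<beta> i) (e (Suc i))) = (\<Sum>i<d. scal act (if i = 0 then 0 else \<beta> (i - 1)) (e i))"
    by (simp only: d' sum.lessThan_Suc_shift) simp
  also have "scal act (\<beta> d') (e d) = (\<Sum>i<d. scal act (- (\<beta> d' * c i)) (e i))"
    by (simp add: t_orbit_top scal_uminus_right scal_sum_right scal_scal scal_uminus_left sum_negf)
  finally have "tact act x = (\<Sum>i<d. scal act (\<gamma> i) (e i))"
    by (simp add: \<gamma>_def scal_diff_left sum_subtractf scal_uminus_left sum_negf)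
  then have \<gamma>0: "\<gamma> i = 0" if "i < d" for i using assms basis_independent that by simp
  have "\<beta> d' = 0" using \<gamma>0[of 0] c0 d_pos by (simp add: \<gamma>_def)
  then have "\<beta> i = 0" if "i < d" for i
    using \<gamma>0[of "Suc i"] that d' by (cases "i = d'") (auto simp: \<gamma>_def)
  then show ?thesis unfolding x by simp
qed

text \<open>\<open>t\<close> is onto since \<open>m\<^sub>0 = t z\<^sub>0\<close> with \<open>z\<^sub>0 = -c\<^sub>0\<^sup>-\<^sup>1 (c\<^sub>1 e\<^sub>0 + \<dots> + c\<^sub>d\<^sub>-\<^sub>1 e\<^sub>d\<^sub>-\<^sub>2 + e\<^sub>d\<^sub>-\<^sub>1)\<close>.\<close>

lemma tact_bij: "bij (tact act)"
proof (rule bijI)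
  show "inj (tact act)"
  proof (rule injI)
    fix x y assume "tact act x = tact act y"
    then have "tact act (x - y) = 0" by (simp add: additive.diff[OF additive_tact])
    then show "x = y" using tact_kernel[of "x - y"] by simp
  qed
  obtain d' where d': "d = Suc d'" using d_pos by (cases d) auto
  have "(\<Sum>j\<le>d. scal act (monic_coeff c d j) (e (0 + j)))
      = scal act (monic_coeff c d 0) (e 0) + (\<Sum>j<d. scal act (monic_coeff c d (Suc j)) (e (Suc j)))"
    by (simp only: d' sum.atMost_Suc_shift lessThan_Suc_atMost) simp
  then have "scal act (c 0) m0 = - (\<Sum>j<d. scal act (monic_coeff c d (Suc j)) (e (Suc j)))"
    using t_orbit_recurrence[of 0] d_pos by (simp add: monic_coeff_def e_0 eq_neg_iff_add_eq_0)
  moreover define z0 where "z0 = scal act (inverse (c 0)) (- (\<Sum>j<d. scal act (monic_coeff c d (Suc j)) (e j)))"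
  ultimately have "tact act z0 = scal act (inverse (c 0)) (scal act (c 0) m0)"
    by (simp add: tact_scal additive.minus[OF additive_tact] additive.sum[OF additive_tact] e_Suc)
  then have "tact act z0 = m0" using c0 by (simp add: scal_scal)
  then have "e i \<in> range (tact act)" for i
    by (cases i) (auto simp: e_0 e_Suc)
  then have w: "tact act (inv (tact act) (e i)) = e i" for i by (simp add: f_inv_into_f)
  have "x \<in> range (tact act)" for x
  proof -
    obtain \<beta> where "x = (\<Sum>i<d. scal act (\<beta> i) (e i))" using basis_coords by blast
    then have "x = tact act (\<Sum>i<d. scal act (\<beta> i) (inv (tact act) (e i)))"
      by (simp add: additive.sum[OF additive_tact] tact_scal w)
    then show ?thesis by blast
  qed
  then show "surj (tact act)" by blast
qed

lemma tpow_eq_int_funpow: "tpow act = int_funpow (tact act)"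
  by (simp add: fun_eq_iff tpow_def int_funpow_def)

lemma tpow_add: "tpow act (a + b) x = tpow act a (tpow act b x)"
  by (simp add: tpow_eq_int_funpow int_funpow_add[OF tact_bij])

lemma tpow_of_nat: "tpow act (int n) = tact act ^^ n"
  by (simp add: tpow_def)

lemma additive_tpow: "Modules.additive (tpow act u)"
  unfolding tpow_eq_int_funpow by (rule additive_int_funpow[OF tact_bij additive_tact])

lemma tpow_scal: "tpow act u (scal act a x) = scal act a (tpow act u x)"
  unfolding tpow_eq_int_funpow by (rule int_funpow_commuting[OF tact_bij, where g = "scal act a"]) (rule tact_scal)

abbreviation orbit :: "int \<Rightarrow> 'm" where
  "orbit k \<equiv> tpow act k m0"

lemma orbit_recurrence: "recurrence_at act c d orbit k"
proof -
  have "orbit (k + int j) = tpow act k (e j)" for j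
    using tpow_add[of k "int j" m0] by (simp add: tpow_of_nat t_orbit_def)
  then have "(\<Sum>j\<le>d. scal act (monic_coeff c d j) (orbit (k + int j)))
      = tpow act k (\<Sum>j\<le>d. scal act (monic_coeff c d j) (e j))"
    by (simp add: additive.sum[OF additive_tpow] tpow_scal)
  also have "\<dots> = 0" using t_orbit_recurrence[of 0] additive.zero[OF additive_tpow] by simp
  finally show ?thesis unfolding recurrence_at_def .
qed

end

section \<open>The lattice spanned by \<open>Y\<^sub>0, \<dots>, Y\<^sub>d\<^sub>-\<^sub>1\<close>\<close>

context L_module
begin

lemma inj_on_of_independent:
  assumes "finite I"
    and indep: "\<And>\<beta> i. (\<Sum>i\<in>I. scal act (\<beta> i) (v i)) = 0 \<Longrightarrow> i \<in> I \<Longrightarrow> \<beta> i = 0"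
  shows "inj_on v I"
proof (rule inj_onI, rule ccontr)
  fix i j assume ij: "i \<in> I" "j \<in> I" "v i = v j" "i \<noteq> j"
  let ?\<beta> = "\<lambda>l. (if l = i then 1 else 0) - (if l = j then 1 else 0) :: 'a"
  have "(\<Sum>l\<in>I. scal act (?\<beta> l) (v l)) = v i - v j"
    using assms(1) ij(1,2) by (simp add: scal_diff_left sum_subtractf if_distrib[of "\<lambda>a. scal act a _"] cong: if_cong)
  then have "?\<beta> i = 0" using indep[of ?\<beta> i] ij(1,3,4) by simp
  then show False using ij(4) by simp
qed

lemma L_basis_of_coords:
  assumes "finite I"
    and span: "\<And>x. \<exists>\<beta>. x = (\<Sum>i\<in>I. scal act (\<beta> i) (v i))"
    and indep: "\<And>\<beta> i. (\<Sum>i\<in>I. scal act (\<beta> i) (v i)) = 0 \<Longrightarrow> i \<in> I \<Longrightarrow> \<beta> i = 0"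
  shows "L_basis act (v ` I)"
proof -
  have inj: "inj_on v I" using assms(1) indep by (rule inj_on_of_independent)
  have "\<exists>S a. finite S \<and> S \<subseteq> v ` I \<and> x = (\<Sum>b\<in>S. scal act (a b) b)" for x
  proof -
    obtain \<beta> where "x = (\<Sum>i\<in>I. scal act (\<beta> i) (v i))" using span by blast
    also have "\<dots> = (\<Sum>b\<in>v ` I. scal act (\<beta> (the_inv_into I v b)) b)"
      unfolding sum.reindex[OF inj] comp_def by (rule sum.cong) (simp_all add: the_inv_into_f_f[OF inj])
    finally show ?thesis
      using assms(1) by (intro exI[of _ "v ` I"] exI[of _ "\<lambda>b. \<beta> (the_inv_into I v b)"]) simp
  qed
  moreover have "\<forall>b\<in>S. a b = 0"
    if S: "finite S" "S \<subseteq> v ` I" and a: "(\<Sum>b\<in>S. scal act (a b) b) = 0" for S a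
  proof -
    let ?a = "\<lambda>b. if b \<in> S then a b else 0"
    have "(\<Sum>i\<in>I. scal act (?a (v i)) (v i)) = (\<Sum>b\<in>v ` I. scal act (?a b) b)"
      unfolding sum.reindex[OF inj] comp_def ..
    also have "\<dots> = (\<Sum>b\<in>S. scal act (a b) b)"
      using S assms(1) by (intro sum.mono_neutral_cong_right) auto
    finally have sum0: "(\<Sum>i\<in>I. scal act (?a (v i)) (v i)) = 0" using a by simp
    have coeff0: "?a (v i) = 0" if "i \<in> I" for i using indep[of "\<lambda>i. ?a (v i)", OF sum0 that] .
    show ?thesis
    proof
      fix b assume "b \<in> S"
      then obtain i where "i \<in> I" "b = v i" using S(2) by blast
      then show "a b = 0" using coeff0[of i] \<open>b \<in> S\<close> by simp
    qed
  qed
  ultimately show ?thesis unfolding L_basis_def by blast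
qed

end

context newton_cyclic_module
begin

abbreviation newton_lattice :: "'m set" where
  "newton_lattice \<equiv> initial_span orbit"

lemma scaled_orbit_in_newton_lattice: "Y orbit k \<in> newton_lattice"
  by (rule scaled_seq_in_initial_span[OF orbit_recurrence])

lemma scaled_orbit_nat: "Y orbit (int i) = scal act (\<sigma> powi ceil_slope s (int i)) (e i)"
  by (simp add: scaled_seq_def tpow_of_nat t_orbit_def)

lemma newton_lattice_is_O_lattice: "O_lattice val act newton_lattice"
  unfolding O_lattice_def
proof (intro conjI exI)
  show "finite (Y orbit ` {0..<int d})" by simp
  show "newton_lattice = O_span val act (Y orbit ` {0..<int d})" ..
  show "(\<lambda>i. Y orbit (int i)) ` {..<d} \<subseteq> newton_lattice"
    using scaled_orbit_in_newton_lattice by blast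
  show "L_basis act ((\<lambda>i. Y orbit (int i)) ` {..<d})"
  proof (rule L_basis_of_coords)
    fix x
    obtain \<beta> where "x = (\<Sum>i<d. scal act (\<beta> i) (e i))" using basis_coords by blast
    then show "\<exists>\<beta>. x = (\<Sum>i<d. scal act (\<beta> i) (Y orbit (int i)))"
      by (intro exI[of _ "\<lambda>i. \<beta> i * \<sigma> powi (- ceil_slope s (int i))"])
        (simp add: scaled_orbit_nat scal_scal mult.assoc uniformizer_powi_cancel)
  next
    fix \<beta> i assume "(\<Sum>i<d. scal act (\<beta> i) (Y orbit (int i))) = 0" "i \<in> {..<d}"
    then have "\<beta> i * \<sigma> powi ceil_slope s (int i) = 0"
      by (intro basis_independent[of "\<lambda>i. \<beta> i * \<sigma> powi ceil_slope s (int i)"])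
        (simp_all add: scaled_orbit_nat scal_scal)
    then show "\<beta> i = 0" using uniformizer_nonzero by simp
  qed simp
qed

text \<open>The semilinear map \<open>\<sigma>\<^bsup>rk\<^esup> t\<^bsup>dk\<^esup> = (\<sigma>\<^sup>r t\<^sup>d)\<^sup>k\<close>; it shifts \<open>Y\<close> by \<open>dk\<close> because
  \<open>\<lceil>(i + dk) s\<rceil> = \<lceil>is\<rceil> + rk\<close>.\<close>

definition twist :: "int \<Rightarrow> 'm \<Rightarrow> 'm" where
  "twist k x = scal act (\<sigma> powi (r * k)) (tpow act (int d * k) x)"

lemma twist_scal: "twist k (scal act a x) = scal act (\<sigma> powi (r * k) * a * \<sigma> powi (- (r * k))) (twist k x)"
  by (simp add: twist_def tpow_scal scal_scal uniformizer_powi_cancel)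

lemma twist_scaled_orbit: "twist k (Y orbit i) = Y orbit (i + int d * k)"
proof -
  have "twist k (Y orbit i) = scal act (\<sigma> powi (r * k) * \<sigma> powi ceil_slope s i) (orbit (int d * k + i))"
    by (simp add: twist_def scaled_seq_def tpow_scal scal_scal tpow_add)
  also have "\<dots> = scal act (\<sigma> powi (ceil_slope s i + r * k)) (orbit (i + int d * k))"
    by (simp add: uniformizer_powi_add[symmetric] add.commute)
  also have "\<dots> = Y orbit (i + int d * k)"
    by (simp add: scaled_seq_def ceil_slope_shift[OF r])
  finally show ?thesis .
qed

lemma twist_twist_uminus: "twist k (twist (- k) x) = x"
proof -
  have "twist k (twist (- k) x)
      = scal act (\<sigma> powi (r * k) * \<sigma> powi (r * (- k))) (tpow act (int d * k + int d * (- k)) x)"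
    by (simp add: twist_def tpow_scal scal_scal tpow_add[symmetric])
  then show ?thesis by (simp add: uniformizer_powi_add[symmetric] tpow_def)
qed

lemma twist_newton_lattice_subset: "twist k ` newton_lattice \<subseteq> newton_lattice"
proof (rule semilinear_image_O_span_subset[where \<tau> = "\<lambda>a. \<sigma> powi (r * k) * a * \<sigma> powi (- (r * k))"])
  show "Modules.additive (twist k)"
    unfolding twist_def by unfold_locales (simp add: additive.add[OF additive_tpow] scal_add_right)
qed (auto simp: twist_scal conj_in_val_ring twist_scaled_orbit scaled_orbit_in_newton_lattice)

lemma newton_lattice_stable: "(\<lambda>x. scal act (\<sigma> powi r) (tpow act (int d) x)) ` newton_lattice = newton_lattice"
proof -
  have "x \<in> twist 1 ` newton_lattice" if "x \<in> newton_lattice" for x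
  proof (rule image_eqI)
    show "x = twist 1 (twist (- 1) x)" using twist_twist_uminus[of 1 x] by simp
    show "twist (- 1) x \<in> newton_lattice" using that twist_newton_lattice_subset[of "- 1"] by blast
  qed
  then have "twist 1 ` newton_lattice = newton_lattice"
    using twist_newton_lattice_subset[of 1] by blast
  moreover have "(\<lambda>x. scal act (\<sigma> powi r) (tpow act (int d) x)) = twist 1"
    by (simp add: twist_def fun_eq_iff)
  ultimately show ?thesis by (simp only:)
qed

text \<open>For \<open>s > 0\<close>, \<open>t\<^sup>-\<^sup>1 Y\<^sub>i = \<sigma>\<^bsup>\<lceil>is\<rceil> - \<lceil>(i-1)s\<rceil>\<^esup> Y\<^sub>i\<^sub>-\<^sub>1\<close> with a nonnegative exponent.\<close>

lemma newton_lattice_tpow_minus_one_subset: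
  assumes "s > 0" shows "tpow act (-1) ` newton_lattice \<subseteq> newton_lattice"
proof (rule semilinear_image_O_span_subset[where \<tau> = id])
  fix g assume "g \<in> Y orbit ` {0..<int d}"
  then obtain i where g: "g = Y orbit i" by blast
  have "ceil_slope s (i - 1) \<le> ceil_slope s i"
    unfolding ceil_slope_def using assms by (intro ceiling_mono) simp
  moreover have "tpow act (-1) g = scal act (\<sigma> powi (ceil_slope s i - ceil_slope s (i - 1))) (Y orbit (i - 1))"
    by (simp add: g scaled_seq_def tpow_scal tpow_add[symmetric] scal_scal uniformizer_powi_add[symmetric])
  ultimately show "tpow act (-1) g \<in> newton_lattice"
    using scaled_orbit_in_newton_lattice[of "i - 1"] by (simp add: O_span_scal uniformizer_powi_in_val_ring)
qed (simp_all add: additive_tpow tpow_scal)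

end

section \<open>Uniqueness of the slope\<close>

context newton_cyclic_module
begin

text \<open>\<open>level N\<close> is the lattice \<open>\<sigma>\<^sup>N \<Lambda>\<close>.\<close>

definition level :: "int \<Rightarrow> 'm set" where
  "level N = {x. scal act (\<sigma> powi (- N)) x \<in> newton_lattice}"

lemma level_antimono: "N' \<le> N \<Longrightarrow> x \<in> level N \<Longrightarrow> x \<in> level N'"
  unfolding level_def
proof (elim CollectE, intro CollectI)
  assume "N' \<le> N" "scal act (\<sigma> powi (- N)) x \<in> newton_lattice"
  then have "scal act (\<sigma> powi (N - N')) (scal act (\<sigma> powi (- N)) x) \<in> newton_lattice"
    using O_span_scal uniformizer_powi_in_val_ring[of "N - N'"] by simp
  then show "scal act (\<sigma> powi (- N')) x \<in> newton_lattice"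
    by (simp add: scal_scal uniformizer_powi_add[symmetric])
qed

lemma level_O_span_combination:
  assumes "\<And>i. i \<in> I \<Longrightarrow> b i \<in> val_ring val" "\<And>i. i \<in> I \<Longrightarrow> y i \<in> level N"
  shows "(\<Sum>i\<in>I. scal act (b i) (y i)) \<in> level N"
proof -
  have "scal act (\<sigma> powi (- N)) (\<Sum>i\<in>I. scal act (b i) (y i))
      = (\<Sum>i\<in>I. scal act (\<sigma> powi (- N) * b i * \<sigma> powi (- (- N))) (scal act (\<sigma> powi (- N)) (y i)))"
    by (simp add: scal_sum_right scal_scal mult.assoc uniformizer_powi_cancel)
  also have "\<dots> \<in> newton_lattice"
    using assms unfolding level_def by (intro O_span_combination conj_in_val_ring) auto
  finally show ?thesis unfolding level_def by simp
qed

lemma in_some_level: "\<exists>K. x \<in> level (- K)"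
proof -
  obtain \<beta> where x: "x = (\<Sum>i<d. scal act (\<beta> i) (e i))" using basis_coords by blast
  define K where "K = (\<Sum>i<d. \<bar>ceil_slope s (int i)\<bar> + \<bar>val (\<beta> i)\<bar>)"
  have K: "\<bar>ceil_slope s (int i)\<bar> + \<bar>val (\<beta> i)\<bar> \<le> K" if "i < d" for i
    unfolding K_def using that by (intro member_le_sum) auto
  have "scal act (\<sigma> powi K) x
      = (\<Sum>i<d. scal act (\<sigma> powi K * \<beta> i * \<sigma> powi (- ceil_slope s (int i))) (Y orbit (int i)))"
    unfolding x by (simp add: scal_sum_right scal_scal scaled_orbit_nat mult.assoc uniformizer_powi_cancel)
  also have "\<dots> \<in> newton_lattice"
  proof (intro O_span_combination scaled_orbit_in_newton_lattice)
    fix i assume "i \<in> {..<d}"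
    then show "\<sigma> powi K * \<beta> i * \<sigma> powi (- ceil_slope s (int i)) \<in> val_ring val"
      using K[of i] by (intro rescale_in_val_ring) auto
  qed
  finally show ?thesis unfolding level_def by auto
qed

lemma O_span_subset_level:
  assumes "finite G" shows "\<exists>K. O_span val act G \<subseteq> level (- K)"
proof -
  obtain Kf where Kf: "\<And>g. g \<in> level (- Kf g)" using in_some_level by metis
  define K where "K = (\<Sum>g\<in>G. \<bar>Kf g\<bar>)"
  have "g \<in> level (- K)" if "g \<in> G" for g
  proof (rule level_antimono[OF _ Kf[of g]])
    have "\<bar>Kf g\<bar> \<le> K" unfolding K_def using assms that by (intro member_le_sum) auto
    then show "- K \<le> - Kf g" by linarith
  qed
  then have "O_span val act G \<subseteq> level (- K)"
    unfolding O_span_def by (auto intro!: level_O_span_combination)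
  then show ?thesis by blast
qed

lemma not_in_some_level:
  assumes "x \<noteq> 0" shows "\<exists>N. x \<notin> level N"
proof -
  obtain \<beta> where x: "x = (\<Sum>i<d. scal act (\<beta> i) (e i))" using basis_coords by blast
  obtain j where j: "j < d" "\<beta> j \<noteq> 0"
    using assms unfolding x by (metis (no_types, lifting) scal_zero_left sum.neutral lessThan_iff)
  define N where "N = val (\<beta> j) - ceil_slope s (int j) + 1"
  have "x \<notin> level N"
  proof
    assume "x \<in> level N"
    then obtain b where b: "\<forall>i\<in>{..<d}. b i \<in> val_ring val"
      and bx: "scal act (\<sigma> powi (- N)) x = (\<Sum>i<d. scal act (b i) (Y orbit (int i)))"
      unfolding level_def using O_span_image_coeffs[of "{..<d}" _ "\<lambda>i. Y orbit (int i)"]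
      by (auto simp: image_atLeastZeroLessThan_int image_image)
    have "x = scal act (\<sigma> powi N) (scal act (\<sigma> powi (- N)) x)"
      by (simp add: scal_scal uniformizer_powi_cancel)
    also have "\<dots> = (\<Sum>i<d. scal act (\<sigma> powi N * b i * \<sigma> powi ceil_slope s (int i)) (e i))"
      unfolding bx by (simp add: scal_sum_right scal_scal scaled_orbit_nat mult.assoc)
    finally have \<beta>j: "\<beta> j = \<sigma> powi N * b j * \<sigma> powi ceil_slope s (int j)"
      using basis_coords_unique[OF _ j(1)] x by metis
    then have "b j \<noteq> 0" using j(2) by auto
    then have "val (\<beta> j) = N + val (b j) + ceil_slope s (int j)"
      unfolding \<beta>j using val_mult uniformizer_powi_nonzero val_uniformizer_powi by simp
    moreover have "val (b j) \<ge> 0" using b j(1) \<open>b j \<noteq> 0\<close> by (auto simp: mem_val_ring_iff)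
    ultimately show False unfolding N_def by linarith
  qed
  then show ?thesis by blast
qed

lemma twist_level: "x \<in> level N \<Longrightarrow> twist k x \<in> level N"
  unfolding level_def
proof (elim CollectE, intro CollectI)
  assume "scal act (\<sigma> powi (- N)) x \<in> newton_lattice"
  then have "twist k (scal act (\<sigma> powi (- N)) x) \<in> newton_lattice"
    using twist_newton_lattice_subset by blast
  then show "scal act (\<sigma> powi (- N)) (twist k x) \<in> newton_lattice"
    by (simp add: twist_scal uniformizer_powi_add[symmetric] add.commute)
qed

definition shift :: "int \<Rightarrow> int \<Rightarrow> 'm \<Rightarrow> 'm" where
  "shift w u x = scal act (\<sigma> powi w) (tpow act u x)"

lemma shift_uminus_shift: "shift (- w) (- u) (shift w u x) = x"
proof -
  have "shift (- w) (- u) (shift w u x) = scal act (\<sigma> powi (- w) * \<sigma> powi w) (tpow act (- u + u) x)"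
    by (simp add: shift_def tpow_scal scal_scal tpow_add[symmetric])
  then show ?thesis by (simp add: uniformizer_powi_cancel tpow_def)
qed

text \<open>\<open>(\<sigma>\<^sup>w t\<^sup>u)\<^sup>d = \<sigma>\<^bsup>wd - ru\<^esup> (\<sigma>\<^sup>r t\<^sup>d)\<^sup>u\<close>, so \<open>d\<close> steps of \<open>shift w u\<close> move every vector
  exactly \<open>wd - ru\<close> levels.\<close>

lemma shift_funpow_d: "(shift w u ^^ d) x = scal act (\<sigma> powi (w * int d - r * u)) (twist u x)"
proof -
  have "(shift w u ^^ n) x = scal act (\<sigma> powi (w * int n)) (tpow act (u * int n) x)" for n
  proof (induction n)
    case (Suc n)
    then show ?case
      by (simp add: shift_def tpow_scal scal_scal tpow_add[symmetric] uniformizer_powi_add[symmetric]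
          algebra_simps)
  qed (simp add: tpow_def)
  then show ?thesis
    by (simp add: twist_def scal_scal uniformizer_powi_add[symmetric] mult.commute)
qed

lemma shift_iterate_not_in_level:
  assumes "x \<notin> level N" shows "(shift w u ^^ (d * n)) x \<notin> level (N + int n * (w * int d - r * u))"
proof (induction n)
  case (Suc n)
  have step: "(shift w u ^^ d) y \<notin> level (N' + (w * int d - r * u))" if "y \<notin> level N'" for y N'
    using that twist_level[of "twist u y" N' "- u"] twist_twist_uminus[of "- u" y]
    by (auto simp: shift_funpow_d level_def scal_scal uniformizer_powi_add[symmetric])
  have "(shift w u ^^ (d * Suc n)) x = (shift w u ^^ d) ((shift w u ^^ (d * n)) x)"
    by (simp add: funpow_add)
  moreover have "N + int (Suc n) * (w * int d - r * u) = (N + int n * (w * int d - r * u)) + (w * int d - r * u)"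
    by (simp add: algebra_simps)
  ultimately show ?case using step[OF Suc] by (simp add: add.assoc)
qed (use assms in simp)

lemma contracting_shift_not_stable:
  assumes "finite G" and stable: "shift w u ` O_span val act G \<subseteq> O_span val act G"
    and x0: "x0 \<in> O_span val act G" "x0 \<noteq> 0"
  shows "w * int d - r * u \<ge> 0"
proof (rule ccontr)
  assume neg: "\<not> w * int d - r * u \<ge> 0"
  obtain K where K: "O_span val act G \<subseteq> level (- K)" using O_span_subset_level[OF assms(1)] by blast
  obtain N where N: "x0 \<notin> level N" using not_in_some_level[OF x0(2)] by blast
  define n where "n = nat (N + K)"
  have "(shift w u ^^ m) x0 \<in> O_span val act G" for m
  proof (induction m)
    case (Suc m)
    then show ?case using stable by auto
  qed (simp add: x0)
  then have "(shift w u ^^ (d * n)) x0 \<in> level (- K)" using K by blast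
  moreover have "N + int n * (w * int d - r * u) \<le> - K"
  proof -
    have "int n * (w * int d - r * u) \<le> int n * (-1)" using neg by (intro mult_left_mono) auto
    then show ?thesis unfolding n_def by linarith
  qed
  ultimately have "(shift w u ^^ (d * n)) x0 \<in> level (N + int n * (w * int d - r * u))"
    by (rule level_antimono[rotated])
  then show False using shift_iterate_not_in_level[OF N] by blast
qed

lemma O_lattice_nonzero:
  assumes "O_lattice val act \<Lambda>" shows "\<exists>x\<in>\<Lambda>. x \<noteq> 0"
proof (rule ccontr)
  assume zero: "\<not> (\<exists>x\<in>\<Lambda>. x \<noteq> 0)"
  obtain B where B: "B \<subseteq> \<Lambda>" "L_basis act B" using assms unfolding O_lattice_def by blast
  have "\<forall>x. \<exists>S a. finite S \<and> S \<subseteq> B \<and> x = (\<Sum>b\<in>S. scal act (a b) b)"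
    using B(2) unfolding L_basis_def by (rule conjunct1)
  then obtain S a where S: "S \<subseteq> B" and m0: "m0 = (\<Sum>b\<in>S. scal act (a b) b)" by blast
  have "(\<Sum>b\<in>S. scal act (a b) b) = 0" using S B(1) zero by (intro sum.neutral) (metis scal_zero_right subsetD)
  then show False using m0 generator_nonzero by simp
qed

lemma stable_lattice_slope:
  assumes "O_lattice val act \<Lambda>" and stable: "(\<lambda>x. scal act (\<sigma> powi w) (tpow act u x)) ` \<Lambda> = \<Lambda>"
    and "u \<noteq> 0"
  shows "real_of_int w / real_of_int u = s"
proof -
  obtain G where G: "finite G" "\<Lambda> = O_span val act G" using assms(1) unfolding O_lattice_def by blast
  obtain x0 where x0: "x0 \<in> \<Lambda>" "x0 \<noteq> 0" using O_lattice_nonzero[OF assms(1)] by blast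
  have forward: "shift w u ` \<Lambda> = \<Lambda>" using stable by (simp add: shift_def[abs_def])
  have backward: "shift (- w) (- u) ` \<Lambda> \<subseteq> \<Lambda>"
  proof
    fix y assume "y \<in> shift (- w) (- u) ` \<Lambda>"
    then obtain x where "x \<in> \<Lambda>" "y = shift (- w) (- u) x" by blast
    moreover obtain x' where "x' \<in> \<Lambda>" "x = shift w u x'" using \<open>x \<in> \<Lambda>\<close> forward by blast
    ultimately show "y \<in> \<Lambda>" using shift_uminus_shift by simp
  qed
  have "w * int d - r * u \<ge> 0"
    by (rule contracting_shift_not_stable[OF G(1)]) (use forward x0 G(2) in auto)
  moreover have "(- w) * int d - r * (- u) \<ge> 0"
    by (rule contracting_shift_not_stable[OF G(1)]) (use backward x0 G(2) in auto)
  ultimately have "w * int d = r * u" by simp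
  then have "real_of_int w * real d = real_of_int r * real_of_int u"
    by (metis of_int_mult of_int_of_nat_eq)
  then have "real_of_int w = s * real_of_int u" using r d_pos by (simp add: algebra_simps)
  then show ?thesis using \<open>u \<noteq> 0\<close> by simp
qed

end

theorem theorem3p7:
  fixes val :: "'a::division_ring \<Rightarrow> int" and \<sigma> :: 'a
    and c :: "nat \<Rightarrow> 'a" and d :: nat and s :: real and r :: int
    and act :: "(nat \<Rightarrow>\<^sub>0 'a) \<Rightarrow> 'm::ab_group_add \<Rightarrow> 'm"
  assumes val: "discrete_valuation val" and compl: "val_complete val"
    and unif: "\<sigma> \<noteq> 0" "val \<sigma> = 1"
    and d: "d \<ge> 1" and c0: "c 0 \<noteq> 0"
    and NP: "newton_single_edge val (monic_poly c d) s"
    and r: "real_of_int r = real d * s"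
    and M: "left_module act" "iso_cyclic_quotient act (monic_poly c d)"
  shows "(\<exists>\<Lambda>. O_lattice val act \<Lambda> \<and>
            (\<lambda>x. scal act (\<sigma> powi r) (tpow act (int d) x)) ` \<Lambda> = \<Lambda> \<and>
            (s > 0 \<longrightarrow> tpow act (-1) ` \<Lambda> \<subseteq> \<Lambda>))
       \<and> (\<forall>u w \<Lambda>'. u \<noteq> 0 \<longrightarrow> O_lattice val act \<Lambda>' \<longrightarrow>
            (\<lambda>x. scal act (\<sigma> powi w) (tpow act u x)) ` \<Lambda>' = \<Lambda>' \<longrightarrow>
            real_of_int w / real_of_int u = s)"
proof -
  obtain m0 where "\<forall>g. act g m0 = 0 \<longleftrightarrow> (\<exists>h. g = h * monic_poly c d)" "\<forall>x. \<exists>g. x = act g m0"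
    using M(2) unfolding iso_cyclic_quotient_def by blast
  then interpret newton_cyclic_module val \<sigma> act c d s r m0
    using val unif d c0 NP r M(1)
    by unfold_locales (auto simp: valuation_def L_module_def)
  show ?thesis
    using newton_lattice_is_O_lattice newton_lattice_stable newton_lattice_tpow_minus_one_subset
      stable_lattice_slope by blast
qed

end
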